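(* For every graph $G$ on $m\ge 3$ vertices, $\lambda_2\ge d_3$, where $\lambda_2$ is the second largest eigenvalue of the Laplacian matrix $L(G)$ and $d_3$ is the third largest vertex degree of $G$.
   Context: All graphs are finite, simple, unweighted and undirected. $L(G)=D(G)-A(G)$ with $A(G)$ the adjacency matrix and $D(G)$ the diagonal matrix of degrees. Laplacian eigenvalues $\lambda_1\ge\lambda_2\ge\cdots$ and degrees $d_1\ge d_2\ge\cdots$ are listed in nonincreasing order with multiplicity. *)

theory Defs
  imports "Jordan_Normal_Form.Char_Poly" "HOL-Library.Multiset"
begin

text \<open>A finite simple graph on the vertex set {0..<m} is given by an edge relation
  E that is symmetric and irreflexive on {0..<m}; only its values on {0..<m} matter.\<close>

definition simple_graph :: "nat \<Rightarrow> (nat \<Rightarrow> nat \<Rightarrow> bool) \<Rightarrow> bool" where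
  "simple_graph m E \<longleftrightarrow> (\<forall>u<m. \<forall>v<m. E u v \<longleftrightarrow> E v u) \<and> (\<forall>v<m. \<not> E v v)"

definition degree :: "nat \<Rightarrow> (nat \<Rightarrow> nat \<Rightarrow> bool) \<Rightarrow> nat \<Rightarrow> nat" where
  "degree m E v = card {u. u < m \<and> E v u}"

definition adjacency_matrix :: "nat \<Rightarrow> (nat \<Rightarrow> nat \<Rightarrow> bool) \<Rightarrow> real mat" where
  "adjacency_matrix m E = mat m m (\<lambda>(i,j). if E i j then 1 else 0)"

definition degree_matrix :: "nat \<Rightarrow> (nat \<Rightarrow> nat \<Rightarrow> bool) \<Rightarrow> real mat" where
  "degree_matrix m E = mat m m (\<lambda>(i,j). if i = j then real (degree m E i) else 0)"

definition laplacian :: "nat \<Rightarrow> (nat \<Rightarrow> nat \<Rightarrow> bool) \<Rightarrow> real mat" where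
  "laplacian m E = degree_matrix m E - adjacency_matrix m E"

text \<open>Laplacian eigenvalues with (algebraic) multiplicity, listed in nonincreasing order:
  the roots of the characteristic polynomial (L is real symmetric, so it splits over the reals).\<close>
definition laplacian_eigenvalues :: "nat \<Rightarrow> (nat \<Rightarrow> nat \<Rightarrow> bool) \<Rightarrow> real list" where
  "laplacian_eigenvalues m E = rev (sorted_list_of_multiset (proots (char_poly (laplacian m E))))"

definition degree_sequence :: "nat \<Rightarrow> (nat \<Rightarrow> nat \<Rightarrow> bool) \<Rightarrow> nat list" where
  "degree_sequence m E = rev (sort (map (degree m E) [0..<m]))"

text \<open>lambda_k and d_k, 1-indexed as in the paper.\<close>
definition lap_eig :: "nat \<Rightarrow> (nat \<Rightarrow> nat \<Rightarrow> bool) \<Rightarrow> nat \<Rightarrow> real" where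
  "lap_eig m E k = laplacian_eigenvalues m E ! (k - 1)"

definition deg_k :: "nat \<Rightarrow> (nat \<Rightarrow> nat \<Rightarrow> bool) \<Rightarrow> nat \<Rightarrow> nat" where
  "deg_k m E k = degree_sequence m E ! (k - 1)"

end

theory Submission
  imports Defs "Jordan_Normal_Form.Schur_Decomposition" "Jordan_Normal_Form.Spectral_Radius"
begin

(* The argument is the classical variational one.
   1. Linear algebra.  A real symmetric matrix has a real eigenvector (its Hermitian form
      is real), so by deflation with an orthonormal completion of a unit eigenvector it is
      orthonormally diagonalizable: U^T A U = D.  Consequently the roots of its
      characteristic polynomial are the diagonal entries of D, and its quadratic form is
      a weighted sum of squares in the coordinates U^T x.
   2. Courant-Fischer lower bound: if x^T L x >= t x^T x on a 2-dimensional subspace,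
      then at least two eigenvalues are >= t (otherwise the subspace contains a nonzero
      vector orthogonal to the unique eigenvector with eigenvalue >= t), hence lambda_2 >= t.
   3. Graphs.  Take three vertices of degree >= d_3.  If two of them, p and q, are
      nonadjacent, use the span of e_p, e_q; if they form a triangle a, b, c, use the span
      of e_a - e_b and e_b - e_c.  On these subspaces the Laplacian form is >= d_3 |x|^2. *)


section \<open>The k-th largest element of a list\<close>

lemma kth_largest_ge_iff:
  fixes xs :: "'a::linorder list"
  assumes k: "1 \<le> k" "k \<le> length xs"
  shows "t \<le> rev (sort xs) ! (k - 1) \<longleftrightarrow> k \<le> length (filter (\<lambda>x. t \<le> x) xs)"
proof -
  define ys where "ys = sort xs"
  define N where "N = length ys"
  have kN: "k \<le> N" using k unfolding N_def ys_def by simp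
  have kth: "rev (sort xs) ! (k - 1) = ys ! (N - k)"
    using k kN unfolding ys_def N_def by (simp add: rev_nth Suc_diff_Suc)
  have count: "length (filter (\<lambda>x. t \<le> x) xs) = card {i. i < N \<and> t \<le> ys ! i}"
    unfolding N_def ys_def by (metis length_filter_conv_card mset_filter mset_sort size_mset)
  have mono: "ys ! i \<le> ys ! j" if "i \<le> j" "j < N" for i j
    using sorted_nth_mono[of ys i j] that unfolding N_def ys_def by simp
  show ?thesis unfolding kth count
  proof
    assume "t \<le> ys ! (N - k)"
    hence "{N - k..<N} \<subseteq> {i. i < N \<and> t \<le> ys ! i}" using mono by (auto intro: order_trans)
    from card_mono[OF _ this] kN show "k \<le> card {i. i < N \<and> t \<le> ys ! i}" by simp
  next
    assume many: "k \<le> card {i. i < N \<and> t \<le> ys ! i}"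
    show "t \<le> ys ! (N - k)"
    proof (rule ccontr)
      assume small: "\<not> t \<le> ys ! (N - k)"
      have "i \<in> {N - k + 1..<N}" if "i < N" "t \<le> ys ! i" for i
        using mono[of i "N - k"] that small k(1) kN by (cases "i \<le> N - k") auto
      hence "{i. i < N \<and> t \<le> ys ! i} \<subseteq> {N - k + 1..<N}" by blast
      from card_mono[OF _ this] many k(1) kN show False by simp
    qed
  qed
qed


lemma length_filter_map_upt:
  "length (filter P (map f [0..<n])) = card {i. i < n \<and> P (f i)}"
proof -
  have "length (filter P (map f [0..<n])) = length (filter (P \<circ> f) [0..<n])"
    by (simp add: filter_map)
  also have "\<dots> = card (set (filter (P \<circ> f) [0..<n]))" by (rule distinct_card[symmetric]) simp
  also have "set (filter (P \<circ> f) [0..<n]) = {i. i < n \<and> P (f i)}" by auto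
  finally show ?thesis .
qed


section \<open>Real symmetric matrices are orthonormally diagonalizable\<close>

lemma hermitian_form_real:
  fixes A :: "real mat" and x :: "nat \<Rightarrow> complex"
  assumes sym: "\<And>i j. i < n \<Longrightarrow> j < n \<Longrightarrow> A $$ (i, j) = A $$ (j, i)"
  defines "S \<equiv> \<Sum>i<n. \<Sum>j<n. cnj (x i) * of_real (A $$ (i, j)) * x j"
  shows "cnj S = S"
proof -
  have "cnj S = (\<Sum>i<n. \<Sum>j<n. x i * of_real (A $$ (i, j)) * cnj (x j))"
    unfolding S_def by (simp add: mult_ac)
  also have "\<dots> = (\<Sum>j<n. \<Sum>i<n. x i * of_real (A $$ (i, j)) * cnj (x j))"
    by (rule sum.swap)
  also have "\<dots> = S" unfolding S_def by (auto simp: mult_ac sym intro!: sum.cong)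
  finally show ?thesis .
qed

lemma symmetric_eigenvalue_real:
  fixes A :: "real mat"
  assumes A: "A \<in> carrier_mat n n" and sym: "A\<^sup>T = A"
    and ev: "eigenvalue (map_mat complex_of_real A) z"
  shows "z = of_real (Re z)"
proof -
  let ?Ac = "map_mat complex_of_real A"
  obtain x where "eigenvector ?Ac x z" using ev unfolding eigenvalue_def by auto
  hence x: "x \<in> carrier_vec n" and x0: "x \<noteq> 0\<^sub>v n" and Ax: "?Ac *\<^sub>v x = z \<cdot>\<^sub>v x"
    unfolding eigenvector_def using A by auto
  have row_eq: "(\<Sum>j<n. of_real (A $$ (i, j)) * x $ j) = z * x $ i" if i: "i < n" for i
  proof -
    have "(?Ac *\<^sub>v x) $ i = (\<Sum>j<n. of_real (A $$ (i, j)) * x $ j)"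
      using i A x by (auto simp: scalar_prod_def row_def lessThan_atLeast0)
    thus ?thesis using Ax i x by simp
  qed
  have sym_entries: "A $$ (i, j) = A $$ (j, i)" if "i < n" "j < n" for i j
    using arg_cong[OF sym, of "\<lambda>B. B $$ (j, i)"] that A by auto
  define S where "S = (\<Sum>i<n. \<Sum>j<n. cnj (x $ i) * of_real (A $$ (i, j)) * x $ j)"
  define N where "N = (\<Sum>i<n. (cmod (x $ i))\<^sup>2)"
  have S_zN: "S = z * of_real N"
  proof -
    have "S = (\<Sum>i<n. cnj (x $ i) * (z * x $ i))"
      unfolding S_def by (auto simp: row_eq[symmetric] sum_distrib_left mult_ac intro!: sum.cong)
    also have "\<dots> = z * of_real N"
      unfolding N_def of_real_sum sum_distrib_left
      by (rule sum.cong) (simp_all add: complex_norm_square mult_ac del: of_real_power)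
    finally show ?thesis .
  qed
  obtain k where k: "k < n" "x $ k \<noteq> 0" using x0 x by (metis eq_vecI carrier_vecD index_zero_vec)
  have "0 < (cmod (x $ k))\<^sup>2" using k by auto
  also have "\<dots> \<le> N" unfolding N_def by (rule member_le_sum) (use k in auto)
  finally have N0: "N \<noteq> 0" by simp
  have "cnj z * of_real N = z * of_real N"
    using hermitian_form_real[of n A "\<lambda>i. x $ i", OF sym_entries, folded S_def] S_zN by simp
  hence "cnj z = z" using N0 by simp
  thus ?thesis by (metis Reals_cnj_iff complex_is_Real_iff of_real_Re)
qed

lemma symmetric_real_eigenvector:
  fixes A :: "real mat"
  assumes A: "A \<in> carrier_mat n n" and sym: "A\<^sup>T = A" and n: "n > 0"
  shows "\<exists>e v. eigenvector A v e"
proof -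
  let ?Ac = "map_mat complex_of_real A"
  have Ac: "?Ac \<in> carrier_mat n n" using A by auto
  from spectrum_non_empty[OF Ac n] obtain z where z: "eigenvalue ?Ac z"
    unfolding spectrum_def by auto
  have "poly (char_poly ?Ac) z = 0" using eigenvalue_root_char_poly[OF Ac] z by auto
  also have "char_poly ?Ac = map_poly of_real (char_poly A)"
    by (rule of_real_hom.char_poly_hom[OF A])
  also have "z = of_real (Re z)" by (rule symmetric_eigenvalue_real[OF A sym z])
  finally have "poly (char_poly A) (Re z) = 0" unfolding of_real_hom.poly_map_poly by simp
  hence "eigenvalue A (Re z)" using eigenvalue_root_char_poly[OF A] by auto
  thus ?thesis unfolding eigenvalue_def by auto
qed

definition orthonormal_mat :: "nat \<Rightarrow> 'a::comm_ring_1 mat \<Rightarrow> bool" where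
  "orthonormal_mat n U \<longleftrightarrow> U \<in> carrier_mat n n \<and> U\<^sup>T * U = 1\<^sub>m n"

lemma orthonormal_mat_right_inverse:
  fixes U :: "'a::field mat"
  assumes "orthonormal_mat n U"
  shows "U * U\<^sup>T = 1\<^sub>m n"
  using assms mat_mult_left_right_inverse[of "U\<^sup>T" n U] unfolding orthonormal_mat_def by auto

lemma orthonormal_mat_mult:
  assumes W: "orthonormal_mat n W" and X: "orthonormal_mat n X"
  shows "orthonormal_mat n (W * X)"
proof -
  have Wc: "W \<in> carrier_mat n n" and Xc: "X \<in> carrier_mat n n"
    using W X unfolding orthonormal_mat_def by auto
  have "(W * X)\<^sup>T * (W * X) = X\<^sup>T * (W\<^sup>T * W) * X"
    using Wc Xc by (simp add: transpose_mult assoc_mult_mat[of _ n n _ n _ n])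
  also have "\<dots> = 1\<^sub>m n" using W X Xc unfolding orthonormal_mat_def by simp
  finally show ?thesis using Wc Xc unfolding orthonormal_mat_def by simp
qed

lemma transpose_conj_mult:
  fixes A :: "'a::comm_ring_1 mat"
  assumes "A \<in> carrier_mat n n" "W \<in> carrier_mat n n" "X \<in> carrier_mat n n"
  shows "(W * X)\<^sup>T * A * (W * X) = X\<^sup>T * (W\<^sup>T * A * W) * X"
  using assms by (simp add: transpose_mult assoc_mult_mat[of _ n n _ n _ n])

definition normalize_vec :: "real vec \<Rightarrow> real vec" where
  "normalize_vec v = (1 / sqrt (v \<bullet> v)) \<cdot>\<^sub>v v"

lemma normalize_vec_scalar_prod:
  assumes "v \<in> carrier_vec n" "w \<in> carrier_vec n"
  shows "normalize_vec v \<bullet> normalize_vec w = (v \<bullet> w) / (sqrt (v \<bullet> v) * sqrt (w \<bullet> w))"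
  using assms unfolding normalize_vec_def
  by (simp add: smult_scalar_prod_distrib scalar_prod_smult_distrib)

lemma normalize_vec_unit:
  assumes "v \<in> carrier_vec n" "v \<noteq> 0\<^sub>v n"
  shows "normalize_vec v \<bullet> normalize_vec v = 1"
proof -
  have "v \<bullet> v > 0" using conjugate_square_greater_0_vec[of v n] assms by simp
  thus ?thesis using normalize_vec_scalar_prod[OF assms(1) assms(1)]
    by (simp add: real_sqrt_mult[symmetric])
qed

lemma normalize_vec_of_unit: "v \<bullet> v = 1 \<Longrightarrow> normalize_vec v = v"
  unfolding normalize_vec_def by simp

lemma normalize_corthogonal:
  assumes vs: "corthogonal vs" "set vs \<subseteq> carrier_vec n"
    and ij: "i < length vs" "j < length vs"
  shows "normalize_vec (vs ! i) \<bullet> normalize_vec (vs ! j) = (if i = j then 1 else 0)"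
proof -
  have carrier: "vs ! i \<in> carrier_vec n" "vs ! j \<in> carrier_vec n" using vs(2) ij by auto
  show ?thesis
  proof (cases "i = j")
    case True
    have "vs ! j \<noteq> 0\<^sub>v n" using corthogonalD[OF vs(1) ij(2) ij(2)] by auto
    thus ?thesis using normalize_vec_unit[OF carrier(2)] True by simp
  next
    case False
    hence "vs ! i \<bullet> vs ! j = 0" using corthogonalD[OF vs(1) ij] by simp
    thus ?thesis using False normalize_vec_scalar_prod[OF carrier] by simp
  qed
qed

lemma unit_eigenvector:
  fixes A :: "real mat"
  assumes A: "A \<in> carrier_mat n n" and ev: "eigenvector A v e"
  shows "\<exists>u. u \<in> carrier_vec n \<and> u \<bullet> u = 1 \<and> A *\<^sub>v u = e \<cdot>\<^sub>v u"
proof (intro exI conjI)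
  have v: "v \<in> carrier_vec n" "v \<noteq> 0\<^sub>v n" and Av: "A *\<^sub>v v = e \<cdot>\<^sub>v v"
    using ev A unfolding eigenvector_def by auto
  show "normalize_vec v \<in> carrier_vec n" using v unfolding normalize_vec_def by simp
  show "normalize_vec v \<bullet> normalize_vec v = 1" by (rule normalize_vec_unit[OF v])
  show "A *\<^sub>v normalize_vec v = e \<cdot>\<^sub>v normalize_vec v"
    unfolding normalize_vec_def using Av v A by (simp add: mult_mat_vec smult_smult_assoc mult.commute)
qed

lemma orthonormal_mat_of_cols:
  fixes ws :: "real vec list"
  assumes ws: "set ws \<subseteq> carrier_vec n" "length ws = n"
    and orth: "\<And>i j. i < n \<Longrightarrow> j < n \<Longrightarrow> ws ! i \<bullet> ws ! j = (if i = j then 1 else 0)"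
  shows "orthonormal_mat n (mat_of_cols n ws)"
proof -
  have W: "mat_of_cols n ws \<in> carrier_mat n n" using mat_of_cols_carrier(1)[of n ws] ws(2) by simp
  have "col (mat_of_cols n ws) i = ws ! i" if "i < n" for i
    using that ws by (simp add: subset_code(1))
  hence "(mat_of_cols n ws)\<^sup>T * mat_of_cols n ws = 1\<^sub>m n"
    by (intro eq_matI) (use W in \<open>auto simp: orth\<close>)
  thus ?thesis using W unfolding orthonormal_mat_def by simp
qed

text \<open>Every unit vector is the first column of an orthonormal matrix: apply Gram-Schmidt to
  a basis completion and normalize.\<close>

lemma orthonormal_completion:
  fixes u :: "real vec"
  assumes u: "u \<in> carrier_vec n" and unit: "u \<bullet> u = 1"
  shows "\<exists>W. orthonormal_mat n W \<and> col W 0 = u"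
proof -
  have u0: "u \<noteq> 0\<^sub>v n" using unit u by auto
  hence n: "n > 0" using u by (cases n) auto
  interpret cof_vec_space n "TYPE(real)" .
  from basis_completion[OF u u0]
  have b: "set (basis_completion u) \<subseteq> carrier_vec n" "distinct (basis_completion u)"
    "\<not> lin_dep (set (basis_completion u))" "length (basis_completion u) = n"
    "hd (basis_completion u) = u" by auto
  define vs where "vs = gram_schmidt n (basis_completion u)"
  from gram_schmidt_result[OF b(1-3) vs_def] b(4)
  have vs: "corthogonal vs" "set vs \<subseteq> carrier_vec n" "length vs = n" by auto
  have "hd vs = u"
    using b(4,5) n gram_schmidt_hd[OF u] unfolding vs_def by (cases "basis_completion u") auto
  hence vs_hd: "vs ! 0 = u" using n vs(3) by (cases vs) auto
  define ws where "ws = map normalize_vec vs"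
  have ws: "set ws \<subseteq> carrier_vec n" "length ws = n"
    using vs unfolding ws_def normalize_vec_def by auto
  have "orthonormal_mat n (mat_of_cols n ws)"
    by (rule orthonormal_mat_of_cols[OF ws]) (use normalize_corthogonal[OF vs(1,2)] vs(3) in
      \<open>simp add: ws_def\<close>)
  moreover have "col (mat_of_cols n ws) 0 = ws ! 0"
    by (rule col_mat_of_cols) (use n ws nth_mem[of 0 ws] in auto)
  moreover have "ws ! 0 = u" using n vs(3) vs_hd normalize_vec_of_unit[OF unit] by (simp add: ws_def)
  ultimately show ?thesis by blast
qed

abbreviation block_diag :: "'a::comm_ring_1 mat \<Rightarrow> nat \<Rightarrow> 'a mat \<Rightarrow> 'a mat" where
  "block_diag a n B \<equiv> four_block_mat a (0\<^sub>m 1 n) (0\<^sub>m n 1) B"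

lemma block_diag_mult:
  assumes "a1 \<in> carrier_mat 1 1" "a2 \<in> carrier_mat 1 1"
    "B1 \<in> carrier_mat n n" "B2 \<in> carrier_mat n n"
  shows "block_diag a1 n B1 * block_diag a2 n B2 = block_diag (a1 * a2) n (B1 * B2)"
  by (subst mult_four_block_mat[OF assms(1) _ _ assms(3) assms(2) _ _ assms(4)]) (use assms in auto)

lemma block_diag_conj:
  assumes a: "a \<in> carrier_mat 1 1" and B: "B \<in> carrier_mat n n" and U: "U \<in> carrier_mat n n"
  shows "(block_diag (1\<^sub>m 1) n U)\<^sup>T * block_diag a n B * block_diag (1\<^sub>m 1) n U
    = block_diag a n (U\<^sup>T * B * U)"
proof -
  have Ut: "(block_diag (1\<^sub>m 1) n U)\<^sup>T = block_diag (1\<^sub>m 1) n U\<^sup>T"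
    using transpose_four_block_mat[of "1\<^sub>m 1" 1 1 "0\<^sub>m 1 n" n "0\<^sub>m n 1" n U] U by simp
  have "(block_diag (1\<^sub>m 1) n U)\<^sup>T * block_diag a n B * block_diag (1\<^sub>m 1) n U
      = block_diag (1\<^sub>m 1 * a) n (U\<^sup>T * B) * block_diag (1\<^sub>m 1) n U"
    unfolding Ut by (subst block_diag_mult) (use a B U in auto)
  also have "\<dots> = block_diag (1\<^sub>m 1 * a * 1\<^sub>m 1) n (U\<^sup>T * B * U)"
    by (rule block_diag_mult) (use a B U in auto)
  finally show ?thesis using a by simp
qed

lemma orthonormal_block_diag:
  assumes "orthonormal_mat n U"
  shows "orthonormal_mat (Suc n) (block_diag (1\<^sub>m 1) n U)"
proof -
  have U: "U \<in> carrier_mat n n" using assms unfolding orthonormal_mat_def by simp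
  have "(block_diag (1\<^sub>m 1) n U)\<^sup>T * block_diag (1\<^sub>m 1) n U
      = (block_diag (1\<^sub>m 1) n U)\<^sup>T * block_diag (1\<^sub>m 1) n (1\<^sub>m n) * block_diag (1\<^sub>m 1) n U"
    using U by simp
  also have "\<dots> = 1\<^sub>m (Suc n)"
    using block_diag_conj[OF _ _ U, of "1\<^sub>m 1" "1\<^sub>m n"] assms U unfolding orthonormal_mat_def
    by simp
  moreover have "block_diag (1\<^sub>m 1) n U \<in> carrier_mat (Suc n) (Suc n)"
    using four_block_carrier_mat[OF one_carrier_mat[of 1] U] by (simp only: plus_1_eq_Suc)
  ultimately show ?thesis unfolding orthonormal_mat_def by simp
qed

lemma orthonormal_deflation:
  fixes A :: "'a::comm_ring_1 mat"
  assumes A: "A \<in> carrier_mat (Suc n) (Suc n)" and sym: "A\<^sup>T = A"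
    and W: "orthonormal_mat (Suc n) W" and eig: "A *\<^sub>v col W 0 = e \<cdot>\<^sub>v col W 0"
  shows "\<exists>B. B \<in> carrier_mat n n \<and> B\<^sup>T = B \<and> W\<^sup>T * A * W = block_diag (mat 1 1 (\<lambda>_. e)) n B"
proof -
  have Wc: "W \<in> carrier_mat (Suc n) (Suc n)" using W unfolding orthonormal_mat_def by simp
  define A' where "A' = W\<^sup>T * A * W"
  have A': "A' \<in> carrier_mat (Suc n) (Suc n)" unfolding A'_def using Wc A by auto
  have "A'\<^sup>T = W\<^sup>T * (W\<^sup>T * A)\<^sup>T" unfolding A'_def
    using transpose_mult[OF mult_carrier_mat[OF _ A] Wc] Wc by simp
  also have "\<dots> = W\<^sup>T * A\<^sup>T * W" using transpose_mult[of "W\<^sup>T" _ _ A] Wc A by simp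
  finally have A'_T: "A'\<^sup>T = A'" unfolding sym A'_def .
  have A'_sym: "A' $$ (i, j) = A' $$ (j, i)" if "i < Suc n" "j < Suc n" for i j
    using arg_cong[OF A'_T, of "\<lambda>B. B $$ (j, i)"] that A' by auto
  have cols: "col W i \<bullet> col W j = (if i = j then 1 else 0)" if "i < Suc n" "j < Suc n" for i j
    using arg_cong[OF conjunct2[OF W[unfolded orthonormal_mat_def]], of "\<lambda>B. B $$ (i, j)"] that Wc
    by simp
  have A'_col0: "A' $$ (i, 0) = (if i = 0 then e else 0)" if i: "i < Suc n" for i
  proof -
    have "A' $$ (i, 0) = col W i \<bullet> (A *\<^sub>v col W 0)"
      unfolding A'_def using i Wc A
      by (simp add: assoc_mult_mat[of _ "Suc n" "Suc n" _ "Suc n" _ "Suc n"] mult_mat_vec_def)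
    also have "\<dots> = e * (col W i \<bullet> col W 0)"
      unfolding eig using i Wc by (simp add: scalar_prod_smult_distrib)
    finally show ?thesis using cols[OF i, of 0] by simp
  qed
  define B where "B = mat n n (\<lambda>(i, j). A' $$ (Suc i, Suc j))"
  have "B \<in> carrier_mat n n" unfolding B_def by simp
  moreover have "B\<^sup>T = B" unfolding B_def by (rule eq_matI) (auto simp: A'_sym)
  moreover have "A' = block_diag (mat 1 1 (\<lambda>_. e)) n B"
    by (rule eq_matI) (use A' A'_col0 A'_sym in \<open>auto simp: B_def\<close>)
  ultimately show ?thesis unfolding A'_def by blast
qed

theorem real_symmetric_spectral:
  fixes A :: "real mat"
  assumes "A \<in> carrier_mat n n" "A\<^sup>T = A"
  shows "\<exists>U D. orthonormal_mat n U \<and> D \<in> carrier_mat n n \<and> diagonal_mat D \<and> U\<^sup>T * A * U = D"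
  using assms
proof (induction n arbitrary: A)
  case 0
  show ?case
    by (rule exI[of _ "1\<^sub>m 0"], rule exI[of _ A])
      (use 0 in \<open>auto simp: diagonal_mat_def orthonormal_mat_def\<close>)
next
  case (Suc n)
  note A = Suc.prems(1) and sym = Suc.prems(2)
  obtain e v where "eigenvector A v e" using symmetric_real_eigenvector[OF A sym] by auto
  then obtain u where u: "u \<in> carrier_vec (Suc n)" "u \<bullet> u = 1" and Au: "A *\<^sub>v u = e \<cdot>\<^sub>v u"
    using unit_eigenvector[OF A] by blast
  obtain W where W: "orthonormal_mat (Suc n) W" and W0: "col W 0 = u"
    using orthonormal_completion[OF u] by auto
  define a where "a = mat 1 1 (\<lambda>_. e)"
  obtain B where B: "B \<in> carrier_mat n n" "B\<^sup>T = B" and WAW: "W\<^sup>T * A * W = block_diag a n B"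
    using orthonormal_deflation[OF A sym W, of e] Au W0 unfolding a_def by auto
  obtain U' D' where U': "orthonormal_mat n U'" and D': "D' \<in> carrier_mat n n" "diagonal_mat D'"
    and U'BU': "U'\<^sup>T * B * U' = D'" using Suc.IH[OF B] by blast
  define X where "X = block_diag (1\<^sub>m 1) n U'"
  have X: "orthonormal_mat (Suc n) X" unfolding X_def by (rule orthonormal_block_diag[OF U'])
  have carriers: "W \<in> carrier_mat (Suc n) (Suc n)" "X \<in> carrier_mat (Suc n) (Suc n)"
    "U' \<in> carrier_mat n n" "a \<in> carrier_mat 1 1"
    using W X U' unfolding orthonormal_mat_def a_def by auto
  have "(W * X)\<^sup>T * A * (W * X) = block_diag a n D'"
    using transpose_conj_mult[OF A carriers(1,2)] block_diag_conj[OF carriers(4) B(1) carriers(3)]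
    unfolding WAW X_def U'BU' by simp
  moreover have "diagonal_mat (block_diag a n D')"
    using D' unfolding diagonal_mat_def a_def by auto
  moreover have "block_diag a n D' \<in> carrier_mat (Suc n) (Suc n)"
    using four_block_carrier_mat[OF carriers(4) D'(1)] by (simp only: plus_1_eq_Suc)
  ultimately show ?case using orthonormal_mat_mult[OF W X] by blast
qed


lemma proots_prod_linear: "proots (\<Prod>a\<leftarrow>as. [:-a, 1:]) = mset (as :: 'a::idom list)"
proof (induction as)
  case (Cons a as)
  have "(\<Prod>a\<leftarrow>as. [:-a, 1:]) \<noteq> 0" by (auto simp: prod_list_zero_iff)
  thus ?case using Cons proots_mult[of "[:-a, 1:]"] proots_linear_factor[of "-a"] by simp
qed simp

lemma orthonormal_diagonalization:
  fixes L :: "'a::field mat"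
  assumes L: "L \<in> carrier_mat n n" and U: "orthonormal_mat n U"
    and D: "D \<in> carrier_mat n n" "diagonal_mat D" and ULU: "U\<^sup>T * L * U = D"
  shows "L = U * D * U\<^sup>T" and "proots (char_poly L) = mset (diag_mat D)"
proof -
  have Uc: "U \<in> carrier_mat n n" and UtU: "U\<^sup>T * U = 1\<^sub>m n"
    using U unfolding orthonormal_mat_def by auto
  note UUt = orthonormal_mat_right_inverse[OF U]
  have "U * D * U\<^sup>T = (U * U\<^sup>T) * L * (U * U\<^sup>T)"
    unfolding ULU[symmetric] using Uc L by (simp add: assoc_mult_mat[of _ n n _ n _ n])
  thus LUDU: "L = U * D * U\<^sup>T" using L unfolding UUt by simp
  have "similar_mat L D"
    unfolding similar_mat_def similar_mat_wit_def Let_def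
    using L D Uc UtU UUt LUDU by (intro exI[of _ U] exI[of _ "U\<^sup>T"]) auto
  hence "char_poly L = char_poly D" by (rule char_poly_similar)
  also have "\<dots> = (\<Prod>a\<leftarrow>diag_mat D. [:-a, 1:])"
    by (rule char_poly_upper_triangular[OF D(1)])
      (use D in \<open>auto simp: upper_triangular_def diagonal_mat_def\<close>)
  finally show "proots (char_poly L) = mset (diag_mat D)" by (simp add: proots_prod_linear)
qed

lemma diagonalized_quadratic_form:
  fixes U D :: "real mat"
  assumes U: "orthonormal_mat n U" and D: "D \<in> carrier_mat n n" "diagonal_mat D"
    and x: "x \<in> carrier_vec n"
  defines "y \<equiv> U\<^sup>T *\<^sub>v x"
  shows "x \<bullet> ((U * D * U\<^sup>T) *\<^sub>v x) = (\<Sum>i<n. D $$ (i, i) * (y $ i)\<^sup>2)"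
    and "x \<bullet> x = (\<Sum>i<n. (y $ i)\<^sup>2)"
proof -
  have Uc: "U \<in> carrier_mat n n" using U unfolding orthonormal_mat_def by simp
  have y: "y \<in> carrier_vec n" unfolding y_def using Uc x by simp
  have "(D *\<^sub>v y) $ i = D $$ (i, i) * y $ i" if i: "i < n" for i
  proof -
    have "(D *\<^sub>v y) $ i = (\<Sum>j\<in>{0..<n}. D $$ (i, j) * y $ j)"
      using i D y by (simp add: scalar_prod_def row_def)
    also have "\<dots> = (\<Sum>j\<in>{0..<n}. if j = i then D $$ (i, i) * y $ i else 0)"
      by (rule sum.cong) (use D i in \<open>auto simp: diagonal_mat_def\<close>)
    finally show ?thesis using i by simp
  qed
  moreover have "x \<bullet> ((U * D * U\<^sup>T) *\<^sub>v x) = y \<bullet> (D *\<^sub>v y)"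
    unfolding y_def using transpose_vec_mult_scalar[OF Uc, of "D *\<^sub>v (U\<^sup>T *\<^sub>v x)" x] Uc D x
    by (simp add: assoc_mult_mat_vec[of _ n n _ n])
  ultimately show "x \<bullet> ((U * D * U\<^sup>T) *\<^sub>v x) = (\<Sum>i<n. D $$ (i, i) * (y $ i)\<^sup>2)"
    using D y by (simp add: scalar_prod_def lessThan_atLeast0 power2_eq_square mult_ac)
  have "x = U *\<^sub>v y"
    unfolding y_def using assoc_mult_mat_vec[of U n n "U\<^sup>T" n x] orthonormal_mat_right_inverse[OF U] Uc x
    by simp
  hence "x \<bullet> x = y \<bullet> y"
    using transpose_vec_mult_scalar[OF Uc, of y x] x y unfolding y_def by simp
  thus "x \<bullet> x = (\<Sum>i<n. (y $ i)\<^sup>2)"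
    using y by (simp add: scalar_prod_def lessThan_atLeast0 power2_eq_square)
qed


section \<open>A Courant-Fischer lower bound for the second largest eigenvalue\<close>

lemma weighted_squares_neg:
  fixes \<mu> y :: "nat \<Rightarrow> real"
  assumes k: "k < n" "y k \<noteq> 0" and vanish: "\<And>i. i < n \<Longrightarrow> t \<le> \<mu> i \<Longrightarrow> y i = 0"
  shows "(\<Sum>i<n. (\<mu> i - t) * (y i)\<^sup>2) < 0"
proof -
  have terms: "(\<mu> i - t) * (y i)\<^sup>2 \<le> 0" if "i < n" for i
    using vanish[OF that] by (cases "t \<le> \<mu> i") (auto simp: mult_nonpos_nonneg)
  have "(\<mu> k - t) * (y k)\<^sup>2 < 0"
    using vanish[OF k(1)] k(2) by (cases "t \<le> \<mu> k") (auto simp: mult_neg_pos)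
  moreover have "(\<Sum>i\<in>{..<n} - {k}. (\<mu> i - t) * (y i)\<^sup>2) \<le> 0"
    by (rule sum_nonpos) (use terms in auto)
  moreover have "(\<Sum>i<n. (\<mu> i - t) * (y i)\<^sup>2)
      = (\<mu> k - t) * (y k)\<^sup>2 + (\<Sum>i\<in>{..<n} - {k}. (\<mu> i - t) * (y i)\<^sup>2)"
    by (rule sum.remove) (use k in auto)
  ultimately show ?thesis by linarith
qed

text \<open>If the quadratic form of U D U^T is at least t times the squared norm on the span of two
  independent vectors, then at least two diagonal entries of D are at least t: otherwise
  some nonzero vector of the span has vanishing coordinates y = U^T x on all entries >= t.\<close>

lemma two_diagonal_entries_ge:
  fixes U D :: "real mat"
  assumes U: "orthonormal_mat n U" and D: "D \<in> carrier_mat n n" "diagonal_mat D"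
    and w: "w1 \<in> carrier_vec n" "w2 \<in> carrier_vec n"
    and indep: "\<And>a b. (a, b) \<noteq> (0, 0) \<Longrightarrow> a \<cdot>\<^sub>v w1 + b \<cdot>\<^sub>v w2 \<noteq> 0\<^sub>v n"
    and quad: "\<And>a b x. x = a \<cdot>\<^sub>v w1 + b \<cdot>\<^sub>v w2 \<Longrightarrow> t * (x \<bullet> x) \<le> x \<bullet> ((U * D * U\<^sup>T) *\<^sub>v x)"
  shows "2 \<le> card {i. i < n \<and> t \<le> D $$ (i, i)}"
proof (rule ccontr)
  define S where "S = {i. i < n \<and> t \<le> D $$ (i, i)}"
  assume "\<not> 2 \<le> card {i. i < n \<and> t \<le> D $$ (i, i)}"
  hence "\<forall>i\<in>S. \<forall>j\<in>S. i = j" using card_le_Suc0_iff_eq[of S] unfolding S_def by simp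
  then obtain s where s: "S \<subseteq> {s}" using someI[of "\<lambda>i. i \<in> S"] by blast
  have Uc: "U \<in> carrier_mat n n" using U unfolding orthonormal_mat_def by simp
  define p where "p = (U\<^sup>T *\<^sub>v w1) $ s"
  define q where "q = (U\<^sup>T *\<^sub>v w2) $ s"
  define a where "a = (if p = 0 \<and> q = 0 then 1 else q)"
  define b where "b = (if p = 0 \<and> q = 0 then 0 else - p)"
  define x where "x = a \<cdot>\<^sub>v w1 + b \<cdot>\<^sub>v w2"
  define y where "y = U\<^sup>T *\<^sub>v x"
  have x: "x \<in> carrier_vec n" unfolding x_def using w by simp
  have y: "y \<in> carrier_vec n" unfolding y_def using Uc x by simp
  have x0: "x \<noteq> 0\<^sub>v n" unfolding x_def by (rule indep) (auto simp: a_def b_def)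
  have "y = a \<cdot>\<^sub>v (U\<^sup>T *\<^sub>v w1) + b \<cdot>\<^sub>v (U\<^sup>T *\<^sub>v w2)"
    unfolding y_def x_def using Uc w by (simp add: mult_add_distrib_mat_vec mult_mat_vec)
  hence y_S: "y $ i = 0" if "i \<in> S" for i
    using s that Uc w unfolding p_def q_def a_def b_def S_def by auto
  have "U *\<^sub>v y = x"
    unfolding y_def using assoc_mult_mat_vec[of U n n "U\<^sup>T" n x] orthonormal_mat_right_inverse[OF U] Uc x
    by simp
  hence "y \<noteq> 0\<^sub>v n" using x0 Uc by auto
  then obtain k where k: "k < n" "y $ k \<noteq> 0" using y by (metis eq_vecI carrier_vecD index_zero_vec)
  have "(\<Sum>i<n. (D $$ (i, i) - t) * (y $ i)\<^sup>2) < 0"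
    by (rule weighted_squares_neg[where y = "\<lambda>i. y $ i", OF k]) (use y_S in \<open>auto simp: S_def\<close>)
  moreover have "(\<Sum>i<n. (D $$ (i, i) - t) * (y $ i)\<^sup>2)
      = x \<bullet> ((U * D * U\<^sup>T) *\<^sub>v x) - t * (x \<bullet> x)"
    using diagonalized_quadratic_form[OF U D x] unfolding y_def[symmetric]
    by (simp add: sum_distrib_left sum_subtractf algebra_simps)
  ultimately show False using quad[OF x_def] by simp
qed

theorem second_largest_eigenvalue_ge:
  fixes L :: "real mat"
  assumes L: "L \<in> carrier_mat n n" and sym: "L\<^sup>T = L"
    and w: "w1 \<in> carrier_vec n" "w2 \<in> carrier_vec n"
    and indep: "\<And>a b. (a, b) \<noteq> (0, 0) \<Longrightarrow> a \<cdot>\<^sub>v w1 + b \<cdot>\<^sub>v w2 \<noteq> 0\<^sub>v n"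
    and quad: "\<And>a b x. x = a \<cdot>\<^sub>v w1 + b \<cdot>\<^sub>v w2 \<Longrightarrow> t * (x \<bullet> x) \<le> x \<bullet> (L *\<^sub>v x)"
  shows "t \<le> rev (sorted_list_of_multiset (proots (char_poly L))) ! 1"
proof -
  obtain U D where U: "orthonormal_mat n U" and D: "D \<in> carrier_mat n n" "diagonal_mat D"
    and ULU: "U\<^sup>T * L * U = D" using real_symmetric_spectral[OF L sym] by blast
  note diag = orthonormal_diagonalization[OF L U D ULU]
  define \<mu> where "\<mu> i = D $$ (i, i)" for i
  have diag_\<mu>: "diag_mat D = map \<mu> [0..<n]" unfolding diag_mat_def \<mu>_def using D by simp
  have eigs: "sorted_list_of_multiset (proots (char_poly L)) = sort (map \<mu> [0..<n])"
    unfolding diag(2) diag_\<mu> sorted_list_of_multiset_mset ..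
  have quad_UDU: "t * (x \<bullet> x) \<le> x \<bullet> ((U * D * U\<^sup>T) *\<^sub>v x)"
    if "x = a \<cdot>\<^sub>v w1 + b \<cdot>\<^sub>v w2" for a b x
    by (subst diag(1)[symmetric]) (rule quad[OF that])
  have "2 \<le> card {i. i < n \<and> t \<le> \<mu> i}"
    unfolding \<mu>_def by (rule two_diagonal_entries_ge[OF U D w indep quad_UDU])
  moreover have "card {i. i < n \<and> t \<le> \<mu> i} = length (filter (\<lambda>x. t \<le> x) (map \<mu> [0..<n]))"
    by (rule length_filter_map_upt[symmetric])
  moreover have "card {i. i < n \<and> t \<le> \<mu> i} \<le> n"
    using card_mono[of "{..<n}" "{i. i < n \<and> t \<le> \<mu> i}"] by auto
  ultimately show ?thesis
    unfolding eigs using kth_largest_ge_iff[of 2 "map \<mu> [0..<n]" t] by simp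
qed


section \<open>The Laplacian of a simple graph\<close>

lemma laplacian_carrier: "laplacian m E \<in> carrier_mat m m"
  unfolding laplacian_def degree_matrix_def adjacency_matrix_def by (rule minus_carrier_mat) simp

lemma laplacian_index:
  "i < m \<Longrightarrow> j < m \<Longrightarrow> laplacian m E $$ (i, j)
    = (if i = j then real (degree m E i) else 0) - (if E i j then 1 else 0)"
  unfolding laplacian_def degree_matrix_def adjacency_matrix_def by simp

lemma laplacian_symmetric:
  assumes "simple_graph m E"
  shows "(laplacian m E)\<^sup>T = laplacian m E"
  by (rule eq_matI)
    (use assms laplacian_carrier[of m E] in \<open>auto simp: laplacian_index simple_graph_def\<close>)

lemma quadratic_form_on_support:
  fixes L :: "real mat"
  assumes L: "L \<in> carrier_mat m m" and x: "x \<in> carrier_vec m" and T: "T \<subseteq> {..<m}"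
    and supp: "\<And>i. i < m \<Longrightarrow> i \<notin> T \<Longrightarrow> x $ i = 0"
  shows "x \<bullet> (L *\<^sub>v x) = (\<Sum>i\<in>T. \<Sum>j\<in>T. x $ i * L $$ (i, j) * x $ j)"
    and "x \<bullet> x = (\<Sum>i\<in>T. x $ i * x $ i)"
proof -
  have restrict: "(\<Sum>i\<in>{0..<m}. f i) = (\<Sum>i\<in>T. f i)"
    if "\<And>i. i < m \<Longrightarrow> i \<notin> T \<Longrightarrow> f i = 0" for f :: "nat \<Rightarrow> real"
    by (rule sum.mono_neutral_right) (use T that finite_subset in auto)
  have "x \<bullet> (L *\<^sub>v x) = (\<Sum>i\<in>{0..<m}. x $ i * (\<Sum>j\<in>{0..<m}. L $$ (i, j) * x $ j))"
    using L x by (simp add: scalar_prod_def row_def)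
  also have "\<dots> = (\<Sum>i\<in>T. x $ i * (\<Sum>j\<in>T. L $$ (i, j) * x $ j))"
    by (subst restrict) (use supp in \<open>auto intro!: sum.cong restrict\<close>)
  finally show "x \<bullet> (L *\<^sub>v x) = (\<Sum>i\<in>T. \<Sum>j\<in>T. x $ i * L $$ (i, j) * x $ j)"
    by (simp add: sum_distrib_left mult_ac)
  have "x \<bullet> x = (\<Sum>i\<in>{0..<m}. x $ i * x $ i)" using x by (simp add: scalar_prod_def)
  also have "\<dots> = (\<Sum>i\<in>T. x $ i * x $ i)" by (rule restrict) (use supp in auto)
  finally show "x \<bullet> x = (\<Sum>i\<in>T. x $ i * x $ i)" .
qed

lemma lap_eig_2_ge:
  assumes G: "simple_graph m E"
    and w: "w1 \<in> carrier_vec m" "w2 \<in> carrier_vec m"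
    and indep: "\<And>a b. (a, b) \<noteq> (0, 0) \<Longrightarrow> a \<cdot>\<^sub>v w1 + b \<cdot>\<^sub>v w2 \<noteq> 0\<^sub>v m"
    and quad: "\<And>a b x. x = a \<cdot>\<^sub>v w1 + b \<cdot>\<^sub>v w2 \<Longrightarrow> t * (x \<bullet> x) \<le> x \<bullet> (laplacian m E *\<^sub>v x)"
  shows "t \<le> lap_eig m E 2"
  using second_largest_eigenvalue_ge[OF laplacian_carrier laplacian_symmetric[OF G] w indep quad]
  unfolding lap_eig_def laplacian_eigenvalues_def by simp

text \<open>Two nonadjacent vertices of degree at least t: the form on span{e_p, e_q} is
  d_p a^2 + d_q b^2.\<close>

lemma lap_eig_2_ge_nonadjacent:
  assumes G: "simple_graph m E" and pq: "p < m" "q < m" "p \<noteq> q" "\<not> E p q"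
    and tp: "t \<le> real (degree m E p)" and tq: "t \<le> real (degree m E q)"
  shows "t \<le> lap_eig m E 2"
proof (rule lap_eig_2_ge[OF G unit_vec_carrier unit_vec_carrier])
  have no_edges: "\<not> E p p" "\<not> E q q" "\<not> E q p" using G pq unfolding simple_graph_def by auto
  have coord: "(a \<cdot>\<^sub>v unit_vec m p + b \<cdot>\<^sub>v unit_vec m q) $ i
      = (if i = p then a else 0) + (if i = q then b else 0)" if "i < m" for a b :: real and i
    using that pq by simp
  show "a \<cdot>\<^sub>v unit_vec m p + b \<cdot>\<^sub>v unit_vec m q \<noteq> 0\<^sub>v m" if "(a, b) \<noteq> (0, 0)" for a b :: real
  proof
    assume zero: "a \<cdot>\<^sub>v unit_vec m p + b \<cdot>\<^sub>v unit_vec m q = 0\<^sub>v m"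
    have "a = 0" using coord[OF pq(1), of a b] pq by (simp add: zero)
    moreover have "b = 0" using coord[OF pq(2), of a b] pq by (simp add: zero)
    ultimately show False using that by simp
  qed
  fix a b :: real and x assume x_def: "x = a \<cdot>\<^sub>v unit_vec m p + b \<cdot>\<^sub>v unit_vec m q"
  have x: "x \<in> carrier_vec m" unfolding x_def by simp
  have T: "{p, q} \<subseteq> {..<m}" using pq by auto
  have supp: "x $ i = 0" if "i < m" "i \<notin> {p, q}" for i using coord[OF that(1)] that x_def by auto
  have xp: "x $ p = a" and xq: "x $ q = b" using coord pq x_def by auto
  note form = quadratic_form_on_support[OF laplacian_carrier[of m E] x T supp]
  have "x \<bullet> (laplacian m E *\<^sub>v x) = real (degree m E p) * a\<^sup>2 + real (degree m E q) * b\<^sup>2"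
    using form(1) pq xp xq no_edges by (simp add: laplacian_index power2_eq_square)
  moreover have "x \<bullet> x = a\<^sup>2 + b\<^sup>2" using form(2) pq xp xq by (simp add: power2_eq_square)
  moreover have "t * a\<^sup>2 \<le> real (degree m E p) * a\<^sup>2" by (rule mult_right_mono[OF tp]) simp
  moreover have "t * b\<^sup>2 \<le> real (degree m E q) * b\<^sup>2" by (rule mult_right_mono[OF tq]) simp
  ultimately show "t * (x \<bullet> x) \<le> x \<bullet> (laplacian m E *\<^sub>v x)" by (simp add: algebra_simps)
qed

text \<open>A triangle a, b, c of vertices of degree at least t: on the span of e_a - e_b and
  e_b - e_c, writing x = (alpha, beta - alpha, -beta) on {a, b, c}, the form equals the
  degree-weighted sum of squares plus 2 (alpha^2 + beta^2 - alpha beta), which is nonnegative.\<close>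

lemma lap_eig_2_ge_triangle:
  assumes G: "simple_graph m E" and abc: "a < m" "b < m" "c < m" "a \<noteq> b" "a \<noteq> c" "b \<noteq> c"
    and edges: "E a b" "E a c" "E b c"
    and ta: "t \<le> real (degree m E a)" and tb: "t \<le> real (degree m E b)"
    and tc: "t \<le> real (degree m E c)"
  shows "t \<le> lap_eig m E 2"
proof (rule lap_eig_2_ge[OF G])
  have sym_edges: "E b a" "E c a" "E c b" and no_loops: "\<not> E a a" "\<not> E b b" "\<not> E c c"
    using G edges abc unfolding simple_graph_def by auto
  define w1 where "w1 = (unit_vec m a - unit_vec m b :: real vec)"
  define w2 where "w2 = (unit_vec m b - unit_vec m c :: real vec)"
  show w: "w1 \<in> carrier_vec m" "w2 \<in> carrier_vec m" unfolding w1_def w2_def by auto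
  have coord: "(\<alpha> \<cdot>\<^sub>v w1 + \<beta> \<cdot>\<^sub>v w2) $ i = \<alpha> * w1 $ i + \<beta> * w2 $ i" if "i < m" for \<alpha> \<beta> i
    using that w by simp
  have coord_abc: "(\<alpha> \<cdot>\<^sub>v w1 + \<beta> \<cdot>\<^sub>v w2) $ a = \<alpha>" "(\<alpha> \<cdot>\<^sub>v w1 + \<beta> \<cdot>\<^sub>v w2) $ b = \<beta> - \<alpha>"
    "(\<alpha> \<cdot>\<^sub>v w1 + \<beta> \<cdot>\<^sub>v w2) $ c = - \<beta>" for \<alpha> \<beta>
    using coord abc unfolding w1_def w2_def by auto
  show "\<alpha> \<cdot>\<^sub>v w1 + \<beta> \<cdot>\<^sub>v w2 \<noteq> 0\<^sub>v m" if "(\<alpha>, \<beta>) \<noteq> (0, 0)" for \<alpha> \<beta>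
  proof
    assume zero: "\<alpha> \<cdot>\<^sub>v w1 + \<beta> \<cdot>\<^sub>v w2 = 0\<^sub>v m"
    have "\<alpha> = 0" using coord_abc(1)[of \<alpha> \<beta>] abc by (simp add: zero)
    moreover have "\<beta> = 0" using coord_abc(3)[of \<alpha> \<beta>] abc by (simp add: zero)
    ultimately show False using that by simp
  qed
  fix \<alpha> \<beta> x assume x_def: "x = \<alpha> \<cdot>\<^sub>v w1 + \<beta> \<cdot>\<^sub>v w2"
  have x: "x \<in> carrier_vec m" unfolding x_def using w by simp
  have xa: "x $ a = \<alpha>" and xb: "x $ b = \<beta> - \<alpha>" and xc: "x $ c = - \<beta>"
    using coord_abc unfolding x_def by auto
  have T: "{a, b, c} \<subseteq> {..<m}" using abc by auto
  have supp: "x $ i = 0" if "i < m" "i \<notin> {a, b, c}" for i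
    using coord[OF that(1)] that abc unfolding x_def w1_def w2_def by auto
  note form = quadratic_form_on_support[OF laplacian_carrier[of m E] x T supp]
  define da db dc where "da = real (degree m E a)" and "db = real (degree m E b)"
    and "dc = real (degree m E c)"
  have "x \<bullet> (laplacian m E *\<^sub>v x) = da * \<alpha>\<^sup>2 + db * (\<beta> - \<alpha>)\<^sup>2 + dc * \<beta>\<^sup>2
      + 2 * (\<alpha>\<^sup>2 + \<beta>\<^sup>2 - \<alpha> * \<beta>)"
    using form(1) abc xa xb xc edges sym_edges no_loops unfolding da_def db_def dc_def
    by (simp add: laplacian_index algebra_simps power2_eq_square)
  moreover have "x \<bullet> x = \<alpha>\<^sup>2 + (\<beta> - \<alpha>)\<^sup>2 + \<beta>\<^sup>2"
    using form(2) abc xa xb xc by (simp add: power2_eq_square)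
  moreover have "t * \<alpha>\<^sup>2 \<le> da * \<alpha>\<^sup>2" by (rule mult_right_mono) (simp_all add: ta da_def)
  moreover have "t * (\<beta> - \<alpha>)\<^sup>2 \<le> db * (\<beta> - \<alpha>)\<^sup>2" by (rule mult_right_mono) (simp_all add: tb db_def)
  moreover have "t * \<beta>\<^sup>2 \<le> dc * \<beta>\<^sup>2" by (rule mult_right_mono) (simp_all add: tc dc_def)
  moreover have "0 \<le> \<alpha>\<^sup>2 + \<beta>\<^sup>2 - \<alpha> * \<beta>"
  proof -
    have "0 \<le> (\<alpha> - \<beta>)\<^sup>2 + \<alpha>\<^sup>2 + \<beta>\<^sup>2" by simp
    thus ?thesis by (simp add: power2_eq_square algebra_simps)
  qed
  ultimately show "t * (x \<bullet> x) \<le> x \<bullet> (laplacian m E *\<^sub>v x)" by (simp add: algebra_simps)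
qed


lemma three_vertices_of_degree_ge_d3:
  assumes "m \<ge> 3"
  obtains a b c where "a < m" "b < m" "c < m" "a \<noteq> b" "a \<noteq> c" "b \<noteq> c"
    "deg_k m E 3 \<le> degree m E a" "deg_k m E 3 \<le> degree m E b" "deg_k m E 3 \<le> degree m E c"
proof -
  define S where "S = {v. v < m \<and> deg_k m E 3 \<le> degree m E v}"
  have "length (filter (\<lambda>x. deg_k m E 3 \<le> x) (map (degree m E) [0..<m])) = card S"
    unfolding S_def by (rule length_filter_map_upt)
  hence "3 \<le> card S"
    using kth_largest_ge_iff[of 3 "map (degree m E) [0..<m]" "deg_k m E 3"] assms
    unfolding deg_k_def degree_sequence_def by simp
  then obtain T where "T \<subseteq> S" "card T = 3" by (meson obtain_subset_with_card_n)
  then obtain a b c where "a \<in> S" "b \<in> S" "c \<in> S" "a \<noteq> b" "a \<noteq> c" "b \<noteq> c"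
    by (auto simp: card_3_iff)
  thus ?thesis using that unfolding S_def by blast
qed

theorem mainTheorem14:
  fixes m :: nat and E :: "nat \<Rightarrow> nat \<Rightarrow> bool"
  assumes "simple_graph m E" and "m \<ge> 3"
  shows "lap_eig m E 2 \<ge> real (deg_k m E 3)"
proof -
  obtain a b c where v: "a < m" "b < m" "c < m" "a \<noteq> b" "a \<noteq> c" "b \<noteq> c"
    and d: "deg_k m E 3 \<le> degree m E a" "deg_k m E 3 \<le> degree m E b" "deg_k m E 3 \<le> degree m E c"
    using three_vertices_of_degree_ge_d3[OF assms(2)] .
  have dr: "real (deg_k m E 3) \<le> real (degree m E a)" "real (deg_k m E 3) \<le> real (degree m E b)"
    "real (deg_k m E 3) \<le> real (degree m E c)" using d by simp_all
  consider "\<not> E a b" | "\<not> E a c" | "\<not> E b c" | "E a b" "E a c" "E b c" by blast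
  thus ?thesis
  proof cases
    case 1 show ?thesis by (rule lap_eig_2_ge_nonadjacent[OF assms(1) v(1,2,4) 1 dr(1,2)])
  next
    case 2 show ?thesis by (rule lap_eig_2_ge_nonadjacent[OF assms(1) v(1,3,5) 2 dr(1,3)])
  next
    case 3 show ?thesis by (rule lap_eig_2_ge_nonadjacent[OF assms(1) v(2,3,6) 3 dr(2,3)])
  next
    case 4 show ?thesis by (rule lap_eig_2_ge_triangle[OF assms(1) v 4 dr])
  qed
qed

end
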